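(* There exists an absolute constant $c_0>0$ such that the following holds. Let $n\ge2$ and $A=\mathrm{diag}(\lambda_1,\dots,\lambda_n)$ with $\lambda_1>\lambda_2\ge\dots\ge\lambda_n$, real, and suppose Assumption 1 (context) holds with constant $c_0$. Let $$E=\begin{pmatrix}0&g^T\\ g&0\end{pmatrix},$$ where $g\sim N(0,I_{n-1})$ is a standard Gaussian vector in $\mathbb{R}^{n-1}$, and let $\tilde u_1$ be a unit leading eigenvector of $\tilde A=A+E$. Then with probability $1-O(n^{-2})$, $$|\langle\tilde u_1,e_{j+1}\rangle|\ge\frac{|g_j|}{4(\lambda_1-\lambda_{j+1})}\qquad\text{for all }1\le j\le n-1,$$ where $e_1,\dots,e_n$ is the standard basis. As a consequence, with probability $1-O(n^{-2})$, $\max_{1\le j\le n-1}(\lambda_1-\lambda_{j+1})|\langle\tilde u_1,e_{j+1}\rangle|\ge c\sqrt{\log n}$ for an absolute constant $c>0$.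
   Context: Let $d(\lambda)\in\mathbb{R}^{n-1}$, $[d(\lambda)]_j=1/(\lambda_1-\lambda_{j+1})$; $\|\cdot\|_{p/(p-2)}$ means $\|\cdot\|_\infty$ when $p=2$. Assumption 1 (with constant $c_0$): either (1) there exists $p\in[2,\infty)$ with $\sqrt{p\log n}\,n^{1/p}\|d(\lambda)\|_{p/(p-2)}\le c_0$, or (2) $\log n\,\|d(\lambda)\|_1\le c_0$. *)

theory Defs
  imports "HOL-Probability.Probability"
begin

text \<open>Conventions: all vectors/matrices are 0-indexed functions on nat.
  Paper index i (1..n) corresponds to index i-1 here. So lam 0 = lambda_1,
  lam j = lambda_{j+1}; the Gaussian vector g has entries g 0 .. g (n-2).\<close>

definition dvec :: "(nat \<Rightarrow> real) \<Rightarrow> nat \<Rightarrow> real" where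
  "dvec lam j = 1 / (lam 0 - lam j)"   \<comment> \<open>entry for paper index j, j = 1..n-1\<close>

definition dnorm :: "nat \<Rightarrow> (nat \<Rightarrow> real) \<Rightarrow> real \<Rightarrow> real" where
  "dnorm n lam p =
     (if p = 2 then Max ((\<lambda>j. \<bar>dvec lam j\<bar>) ` {1..n-1})
      else (\<Sum>j\<in>{1..n-1}. \<bar>dvec lam j\<bar> powr (p / (p - 2))) powr ((p - 2) / p))"

definition assumption1 :: "real \<Rightarrow> nat \<Rightarrow> (nat \<Rightarrow> real) \<Rightarrow> bool" where
  "assumption1 c0 n lam \<longleftrightarrow>
     (\<exists>p::real. 2 \<le> p \<and> sqrt (p * ln (real n)) * (real n) powr (1 / p) * dnorm n lam p \<le> c0)
     \<or> ln (real n) * (\<Sum>j\<in>{1..n-1}. \<bar>dvec lam j\<bar>) \<le> c0"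

definition pert_mat :: "(nat \<Rightarrow> real) \<Rightarrow> (nat \<Rightarrow> real) \<Rightarrow> nat \<Rightarrow> nat \<Rightarrow> real" where
  "pert_mat lam g i k =
     (if i = k then lam i else 0)
     + (if i = 0 \<and> k \<ge> 1 then g (k - 1) else 0)
     + (if k = 0 \<and> i \<ge> 1 then g (i - 1) else 0)"

definition is_eigenpair :: "nat \<Rightarrow> (nat \<Rightarrow> nat \<Rightarrow> real) \<Rightarrow> real \<Rightarrow> (nat \<Rightarrow> real) \<Rightarrow> bool" where
  "is_eigenpair n M mu v \<longleftrightarrow>
     (\<forall>i<n. (\<Sum>k<n. M i k * v k) = mu * v i) \<and> (\<exists>i<n. v i \<noteq> 0)"

definition unit_leading_eigvec :: "nat \<Rightarrow> (nat \<Rightarrow> nat \<Rightarrow> real) \<Rightarrow> (nat \<Rightarrow> real) \<Rightarrow> bool" where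
  "unit_leading_eigvec n M u \<longleftrightarrow>
     (\<Sum>i<n. (u i)\<^sup>2) = 1 \<and>
     (\<exists>mu. is_eigenpair n M mu u \<and> (\<forall>mu' v. is_eigenpair n M mu' v \<longrightarrow> mu' \<le> mu))"

definition gauss_vec :: "nat \<Rightarrow> (nat \<Rightarrow> real) measure" where
  "gauss_vec m = PiM {..<m} (\<lambda>_. density lborel std_normal_density)"

end

theory Submission
  imports Defs
begin

text \<open>
  The perturbation turns A into an arrowhead matrix, so an eigenpair (mu, u) with mu different
  from every lam k, k \<ge> 1, satisfies u k = g (k - 1) * u 0 / (mu - lam k) and the secular
  equation mu - lam 0 = secular_sum n lam g mu. If secular_sum n lam g (lam 0) \<le> lam 0 - lam 1,
  the secular equation has a root above lam 0, so the leading eigenvalue lies in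
  (lam 0, 2 lam 0 - lam 1]; the unit norm then forces |u 0| \<ge> 1/2, and
  mu - lam j \<le> 2 (lam 0 - lam j) gives the coordinate bound. Assumption 1 provides the smallness
  condition once every (g k)^2 \<le> 200 ln n, which fails with probability O(1/n^2) by a moment
  bound on Gaussian tails. Since all |g k| < sqrt (ln n / 2) also has probability O(1/n^2),
  the second claim follows from the first.
\<close>

definition secular_sum :: "nat \<Rightarrow> (nat \<Rightarrow> real) \<Rightarrow> (nat \<Rightarrow> real) \<Rightarrow> real \<Rightarrow> real" where
  "secular_sum n lam g x = (\<Sum>k\<in>{1..<n}. (g (k - 1))\<^sup>2 / (x - lam k))"

lemma pert_mat_row_0:
  assumes "1 \<le> n"
  shows "(\<Sum>k<n. pert_mat lam g 0 k * v k) = lam 0 * v 0 + (\<Sum>k\<in>{1..<n}. g (k - 1) * v k)"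
proof -
  have "{..<n} = insert 0 {1..<n}" using assms by auto
  then show ?thesis by (simp add: pert_mat_def)
qed

lemma pert_mat_row:
  assumes "1 \<le> i" "i < n"
  shows "(\<Sum>k<n. pert_mat lam g i k * v k) = g (i - 1) * v 0 + lam i * v i"
proof -
  have "(\<Sum>k<n. pert_mat lam g i k * v k)
      = (\<Sum>k<n. (if k = i then lam i * v i else 0) + (if k = 0 then g (i - 1) * v 0 else 0))"
    using assms by (intro sum.cong) (auto simp: pert_mat_def)
  then show ?thesis using assms by (simp add: sum.distrib)
qed

lemma is_eigenpair_pert_mat_iff:
  assumes "1 \<le> n"
  shows "is_eigenpair n (pert_mat lam g) mu v \<longleftrightarrow>
    lam 0 * v 0 + (\<Sum>k\<in>{1..<n}. g (k - 1) * v k) = mu * v 0 \<and>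
    (\<forall>i\<in>{1..<n}. g (i - 1) * v 0 + lam i * v i = mu * v i) \<and> (\<exists>i<n. v i \<noteq> 0)"
proof -
  have "(\<forall>i<n. P i) \<longleftrightarrow> P 0 \<and> (\<forall>i\<in>{1..<n}. P i)" for P
    using assms by (metis atLeastLessThan_iff less_one linorder_not_less order_le_less_trans)
  then show ?thesis
    unfolding is_eigenpair_def using assms by (simp add: pert_mat_row_0 pert_mat_row)
qed

lemma eigenpair_of_secular_root:
  assumes "1 \<le> n" and "\<forall>k\<in>{1..<n}. x \<noteq> lam k" and "x - lam 0 = secular_sum n lam g x"
  shows "is_eigenpair n (pert_mat lam g) x (\<lambda>k. if k = 0 then 1 else g (k - 1) / (x - lam k))"
proof -
  have "(\<Sum>k\<in>{1..<n}. g (k - 1) * (if k = 0 then 1 else g (k - 1) / (x - lam k)))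
      = secular_sum n lam g x"
    unfolding secular_sum_def by (intro sum.cong) (auto simp: power2_eq_square)
  then show ?thesis
    using assms by (auto simp: is_eigenpair_pert_mat_iff field_simps)
qed

lemma eigenvector_coord_pert_mat:
  assumes "is_eigenpair n (pert_mat lam g) mu u" and "k \<in> {1..<n}" and "mu \<noteq> lam k"
  shows "u k = g (k - 1) * u 0 / (mu - lam k)"
proof -
  have "g (k - 1) * u 0 + lam k * u k = mu * u k"
    using assms(1,2) by (simp add: is_eigenpair_pert_mat_iff)
  then show ?thesis using assms(3) by (simp add: field_simps)
qed

lemma eigenvalue_secular_equation:
  assumes eig: "is_eigenpair n (pert_mat lam g) mu u"
    and "1 \<le> n" and off: "\<forall>k\<in>{1..<n}. mu \<noteq> lam k"
  shows "u 0 \<noteq> 0" and "mu - lam 0 = secular_sum n lam g mu"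
proof -
  have coord: "u k = g (k - 1) * u 0 / (mu - lam k)" if "k \<in> {1..<n}" for k
    using eigenvector_coord_pert_mat[OF eig that] off that by blast
  show "u 0 \<noteq> 0"
  proof
    assume "u 0 = 0"
    then have "u i = 0" if "i < n" for i
      using coord[of i] that by (cases "i = 0") auto
    then show False using eig unfolding is_eigenpair_def by blast
  qed
  have "(\<Sum>k\<in>{1..<n}. g (k - 1) * u k) = u 0 * secular_sum n lam g mu"
    unfolding secular_sum_def sum_distrib_left
    by (intro sum.cong) (auto simp: coord power2_eq_square)
  then have "(mu - lam 0) * u 0 = u 0 * secular_sum n lam g mu"
    using eig \<open>1 \<le> n\<close> by (simp add: is_eigenpair_pert_mat_iff algebra_simps)
  with \<open>u 0 \<noteq> 0\<close> show "mu - lam 0 = secular_sum n lam g mu" by simp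
qed

lemma secular_sum_antimono:
  assumes "\<forall>k\<in>{1..<n}. lam k < x" and "x \<le> y"
  shows "secular_sum n lam g y \<le> secular_sum n lam g x"
  unfolding secular_sum_def
  using assms by (intro sum_mono divide_left_mono mult_pos_pos) force+

lemma secular_root_exists:
  assumes below: "\<forall>k\<in>{1..<n}. lam k < lam 0" and pos: "0 < secular_sum n lam g (lam 0)"
  obtains x where "lam 0 < x" and "x - lam 0 = secular_sum n lam g x"
proof -
  define \<sigma> where "\<sigma> = secular_sum n lam g (lam 0)"
  define f where "f x = x - lam 0 - secular_sum n lam g x" for x
  have "continuous_on {lam 0..lam 0 + \<sigma>} f"
    unfolding f_def secular_sum_def using below by (intro continuous_intros) fastforce
  moreover have "f (lam 0) < 0" using pos unfolding f_def by simp
  moreover have "0 \<le> f (lam 0 + \<sigma>)"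
    using secular_sum_antimono[OF below, of "lam 0 + \<sigma>" g] pos unfolding f_def \<sigma>_def by simp
  ultimately obtain x where "lam 0 \<le> x" "f x = 0"
    using IVT'[of f "lam 0" 0 "lam 0 + \<sigma>"] pos unfolding \<sigma>_def by auto
  with \<open>f (lam 0) < 0\<close> show thesis
    by (intro that[of x]) (auto simp: f_def order_le_less)
qed

lemma leading_eigenvalue_gt:
  assumes "1 \<le> n" and below: "\<forall>k\<in>{1..<n}. lam k < lam 0" and "\<exists>k\<in>{1..<n}. g (k - 1) \<noteq> 0"
    and top: "\<forall>mu' v. is_eigenpair n (pert_mat lam g) mu' v \<longrightarrow> mu' \<le> mu"
  shows "lam 0 < mu"
proof -
  obtain k where k: "k \<in> {1..<n}" "g (k - 1) \<noteq> 0" using assms(3) by blast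
  have "0 < secular_sum n lam g (lam 0)"
    unfolding secular_sum_def using k below
    by (intro sum_pos2[OF _ k(1)]) (auto simp: less_imp_le)
  then obtain x where x: "lam 0 < x" "x - lam 0 = secular_sum n lam g x"
    using secular_root_exists below by blast
  then have "\<forall>k\<in>{1..<n}. x \<noteq> lam k" using below by fastforce
  with x have "x \<le> mu" using top eigenpair_of_secular_root[OF \<open>1 \<le> n\<close>] by blast
  with x show ?thesis by simp
qed

lemma unit_eigvec_first_coord_ge:
  assumes eig: "is_eigenpair n (pert_mat lam g) mu u" and unit: "(\<Sum>i<n. (u i)\<^sup>2) = 1"
    and "1 \<le> n" and "0 < \<delta>" and gap: "\<forall>k\<in>{1..<n}. \<delta> \<le> lam 0 - lam k"
    and "lam 0 < mu" and small: "secular_sum n lam g (lam 0) \<le> \<delta>"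
  shows "1 / 2 \<le> \<bar>u 0\<bar>"
proof -
  have gap_mu: "0 < (lam 0 - lam k) * \<delta>" "(lam 0 - lam k) * \<delta> \<le> (mu - lam k)\<^sup>2"
    if "k \<in> {1..<n}" for k
  proof -
    have "\<delta> \<le> lam 0 - lam k" using gap that by blast
    with \<open>lam 0 < mu\<close> \<open>0 < \<delta>\<close> show "0 < (lam 0 - lam k) * \<delta>"
      and "(lam 0 - lam k) * \<delta> \<le> (mu - lam k)\<^sup>2"
      unfolding power2_eq_square by (auto intro: mult_mono)
  qed
  have coord: "u k = g (k - 1) * u 0 / (mu - lam k)" if "k \<in> {1..<n}" for k
    using eigenvector_coord_pert_mat[OF eig that] gap_mu[OF that] by force
  define \<rho> where "\<rho> = (\<Sum>k\<in>{1..<n}. (g (k - 1))\<^sup>2 / (mu - lam k)\<^sup>2)"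
  have "\<rho> \<le> (\<Sum>k\<in>{1..<n}. (g (k - 1))\<^sup>2 / ((lam 0 - lam k) * \<delta>))"
    unfolding \<rho>_def using gap_mu
    by (intro sum_mono divide_left_mono) (auto intro: mult_pos_pos order_less_le_trans)
  also have "\<dots> = secular_sum n lam g (lam 0) / \<delta>"
    by (simp add: secular_sum_def sum_divide_distrib divide_divide_eq_left)
  also have "\<dots> \<le> 1" using small \<open>0 < \<delta>\<close> by simp
  finally have "\<rho> \<le> 1" .
  have "{..<n} = insert 0 {1..<n}" using \<open>1 \<le> n\<close> by auto
  then have "1 = (u 0)\<^sup>2 + (\<Sum>k\<in>{1..<n}. (u k)\<^sup>2)" using unit by simp
  also have "(\<Sum>k\<in>{1..<n}. (u k)\<^sup>2) = (u 0)\<^sup>2 * \<rho>"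
    unfolding \<rho>_def sum_distrib_left
    by (intro sum.cong) (auto simp: coord power_divide power_mult_distrib)
  finally have "1 = (u 0)\<^sup>2 + (u 0)\<^sup>2 * \<rho>" .
  then have "1 / 4 \<le> (u 0)\<^sup>2"
    using mult_left_mono[OF \<open>\<rho> \<le> 1\<close> zero_le_power2, of "u 0"] by linarith
  then have "(1 / 2)\<^sup>2 \<le> \<bar>u 0\<bar>\<^sup>2" by (simp add: power_divide)
  then show ?thesis by (rule power2_le_imp_le) simp
qed

lemma leading_eigvec_coord_ge:
  assumes "1 \<le> n" and "0 < \<delta>" and gap: "\<forall>k\<in>{1..<n}. \<delta> \<le> lam 0 - lam k"
    and small: "secular_sum n lam g (lam 0) \<le> \<delta>"
    and lead: "unit_leading_eigvec n (pert_mat lam g) u" and j: "j \<in> {1..<n}"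
  shows "\<bar>g (j - 1)\<bar> / (4 * (lam 0 - lam j)) \<le> \<bar>u j\<bar>"
proof (cases "\<exists>k\<in>{1..<n}. g (k - 1) \<noteq> 0")
  case False
  then show ?thesis using j by simp
next
  case True
  obtain mu where unit: "(\<Sum>i<n. (u i)\<^sup>2) = 1" and eig: "is_eigenpair n (pert_mat lam g) mu u"
    and top: "\<forall>mu' v. is_eigenpair n (pert_mat lam g) mu' v \<longrightarrow> mu' \<le> mu"
    using lead unfolding unit_leading_eigvec_def by blast
  have below: "\<forall>k\<in>{1..<n}. lam k < lam 0" using gap \<open>0 < \<delta>\<close> by fastforce
  have "lam 0 < mu" using leading_eigenvalue_gt[OF \<open>1 \<le> n\<close> below True top] .
  then have off: "\<forall>k\<in>{1..<n}. mu \<noteq> lam k" using below by fastforce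
  have "mu - lam 0 = secular_sum n lam g mu"
    by (rule eigenvalue_secular_equation(2)[OF eig \<open>1 \<le> n\<close> off])
  also have "\<dots> \<le> secular_sum n lam g (lam 0)"
    using secular_sum_antimono below \<open>lam 0 < mu\<close> by (simp add: less_imp_le)
  finally have mu_j: "mu - lam j \<le> 2 * (lam 0 - lam j)" using small gap j by fastforce
  have u0: "1 / 2 \<le> \<bar>u 0\<bar>"
    using unit_eigvec_first_coord_ge[OF eig unit \<open>1 \<le> n\<close> \<open>0 < \<delta>\<close> gap \<open>lam 0 < mu\<close> small] .
  have pos: "0 < mu - lam j" using below j \<open>lam 0 < mu\<close> by fastforce
  have "\<bar>g (j - 1)\<bar> * (1 / 2) / (2 * (lam 0 - lam j)) \<le> \<bar>g (j - 1)\<bar> * \<bar>u 0\<bar> / (mu - lam j)"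
    using u0 mu_j pos by (intro frac_le mult_left_mono) auto
  also have "\<dots> = \<bar>u j\<bar>"
    using eigenvector_coord_pert_mat[OF eig j] off j pos by (simp add: abs_mult)
  finally show ?thesis by simp
qed

lemma sum_le_card_powr_mult_sum_powr:
  fixes d :: "'a \<Rightarrow> real"
  assumes "finite J" and "J \<noteq> {}" and pos: "\<And>j. j \<in> J \<Longrightarrow> 0 < d j" and "1 \<le> q"
  shows "(\<Sum>j\<in>J. d j) \<le> real (card J) powr (1 - 1 / q) * (\<Sum>j\<in>J. d j powr q) powr (1 / q)"
proof -
  define N where "N = real (card J)"
  define S where "S = (\<Sum>j\<in>J. d j powr q)"
  have "0 < N" unfolding N_def using assms by (simp add: card_gt_0_iff)
  define A where "A = (\<Sum>j\<in>J. (1 / N) * d j)"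
  have "0 < A" unfolding A_def using assms \<open>0 < N\<close> by (intro sum_pos) auto
  have "(\<Sum>j\<in>J. 1 / N) = 1" using \<open>0 < N\<close> by (simp add: N_def)
  then have "A powr q \<le> (\<Sum>j\<in>J. (1 / N) * d j powr q)"
    unfolding A_def using convex_on_sum[OF \<open>finite J\<close> \<open>J \<noteq> {}\<close> powr_convex[OF \<open>1 \<le> q\<close>],
        of "\<lambda>_. 1 / N" d] \<open>0 < N\<close> pos by simp
  also have "\<dots> = S / N" by (simp add: S_def sum_divide_distrib)
  finally have "(A powr q) powr (1 / q) \<le> (S / N) powr (1 / q)"
    using \<open>1 \<le> q\<close> by (intro powr_mono2) auto
  then have "A \<le> S powr (1 / q) / N powr (1 / q)"
    using \<open>0 < A\<close> \<open>1 \<le> q\<close> by (simp add: powr_powr powr_divide)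
  have "(\<Sum>j\<in>J. d j) = N * A"
    unfolding A_def using \<open>0 < N\<close> by (simp add: sum_distrib_left)
  also have "\<dots> \<le> N * (S powr (1 / q) / N powr (1 / q))"
    using \<open>0 < N\<close> by (intro mult_left_mono[OF \<open>A \<le> S powr (1 / q) / N powr (1 / q)\<close>]) simp
  also have "\<dots> = N powr (1 - 1 / q) * S powr (1 / q)"
    using \<open>0 < N\<close> by (simp add: powr_diff)
  finally show ?thesis by (simp add: N_def S_def)
qed

lemma abs_dvec_le_dnorm:
  assumes "2 \<le> p" and j: "j \<in> {1..n-1}"
  shows "\<bar>dvec lam j\<bar> \<le> dnorm n lam p"
proof (cases "p = 2")
  case True
  then show ?thesis unfolding dnorm_def using j by (simp add: Max_ge)
next
  case False
  define q where "q = p / (p - 2)"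
  have "1 < q" "(p - 2) / p = 1 / q" unfolding q_def using \<open>2 \<le> p\<close> False by auto
  have "\<bar>dvec lam j\<bar> = (\<bar>dvec lam j\<bar> powr q) powr (1 / q)"
    using \<open>1 < q\<close> by (simp add: powr_powr)
  also have "\<dots> \<le> (\<Sum>i\<in>{1..n-1}. \<bar>dvec lam i\<bar> powr q) powr (1 / q)"
    using j \<open>1 < q\<close> by (intro powr_mono2 member_le_sum) auto
  also have "\<dots> = dnorm n lam p"
    unfolding dnorm_def using False \<open>(p - 2) / p = 1 / q\<close> by (simp add: q_def)
  finally show ?thesis .
qed

lemma sum_abs_dvec_le_dnorm:
  assumes "2 \<le> p" and "2 \<le> n" and below: "\<forall>j\<in>{1..n-1}. lam j < lam 0"
  shows "(\<Sum>j\<in>{1..n-1}. \<bar>dvec lam j\<bar>) \<le> real n powr (2 / p) * dnorm n lam p"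
proof (cases "p = 2")
  case True
  have "(\<Sum>j\<in>{1..n-1}. \<bar>dvec lam j\<bar>) \<le> real (card {1..n-1}) * dnorm n lam p"
    using abs_dvec_le_dnorm[OF \<open>2 \<le> p\<close>] by (intro sum_bounded_above) auto
  also have "\<dots> \<le> real n * dnorm n lam p"
  proof (rule mult_right_mono)
    have "1 \<in> {1..n-1}" using \<open>2 \<le> n\<close> by simp
    from order_trans[OF abs_ge_zero abs_dvec_le_dnorm[OF \<open>2 \<le> p\<close> this]]
    show "0 \<le> dnorm n lam p" .
  qed simp
  finally show ?thesis using True \<open>2 \<le> n\<close> by simp
next
  case False
  define q where "q = p / (p - 2)"
  have "1 \<le> q" "1 - 1 / q = 2 / p" "(p - 2) / p = 1 / q"
    unfolding q_def using \<open>2 \<le> p\<close> False by (auto simp: field_simps)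
  have pos: "0 < \<bar>dvec lam j\<bar>" if "j \<in> {1..n-1}" for j
    using below that by (fastforce simp: dvec_def)
  have "(\<Sum>j\<in>{1..n-1}. \<bar>dvec lam j\<bar>)
      \<le> real (n - 1) powr (2 / p) * (\<Sum>j\<in>{1..n-1}. \<bar>dvec lam j\<bar> powr q) powr (1 / q)"
    using sum_le_card_powr_mult_sum_powr[of "{1..n-1}", OF _ _ pos \<open>1 \<le> q\<close>] \<open>2 \<le> n\<close>
      \<open>1 - 1 / q = 2 / p\<close> by simp
  also have "\<dots> \<le> real n powr (2 / p) * dnorm n lam p"
    unfolding dnorm_def using False \<open>(p - 2) / p = 1 / q\<close> \<open>2 \<le> p\<close>
    by (simp add: q_def[symmetric] mult_right_mono powr_mono2)
  finally show ?thesis .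
qed

lemma assumption1_dvec_bound:
  assumes A: "assumption1 c0 n lam" and "2 \<le> n" and "1 \<le> ln (real n)"
    and below: "\<forall>j\<in>{1..n-1}. lam j < lam 0"
  shows "ln (real n) * (\<Sum>j\<in>{1..n-1}. \<bar>dvec lam j\<bar>) * \<bar>dvec lam 1\<bar> \<le> c0\<^sup>2"
proof -
  define L where "L = ln (real n)"
  define s where "s = (\<Sum>j\<in>{1..n-1}. \<bar>dvec lam j\<bar>)"
  have one: "1 \<in> {1..n-1}" using \<open>2 \<le> n\<close> by simp
  have d1_s: "\<bar>dvec lam 1\<bar> \<le> s" unfolding s_def by (rule member_le_sum[OF one]) auto
  from A consider (lp_norm) p where "2 \<le> p"
      "sqrt (p * L) * real n powr (1 / p) * dnorm n lam p \<le> c0"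
    | (l1_norm) "L * s \<le> c0"
    unfolding assumption1_def L_def s_def by blast
  then show ?thesis
  proof cases
    case l1_norm
    have "0 \<le> s" "1 \<le> L" using d1_s \<open>1 \<le> ln (real n)\<close> unfolding L_def by linarith+
    then have "\<bar>dvec lam 1\<bar> \<le> s * L"
      using d1_s mult_left_mono[OF \<open>1 \<le> L\<close> \<open>0 \<le> s\<close>] by simp
    then have "L * s * \<bar>dvec lam 1\<bar> \<le> L * s * (s * L)"
      using \<open>0 \<le> s\<close> \<open>1 \<le> L\<close> by (intro mult_left_mono) auto
    also have "\<dots> = (L * s)\<^sup>2" by (simp add: power2_eq_square)
    also have "\<dots> \<le> c0\<^sup>2"
      using l1_norm \<open>0 \<le> s\<close> \<open>1 \<le> L\<close> by (intro power_mono) auto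
    finally show ?thesis unfolding L_def s_def .
  next
    case (lp_norm p)
    define D where "D = dnorm n lam p"
    have D: "\<bar>dvec lam 1\<bar> \<le> D" "0 \<le> D"
      using abs_dvec_le_dnorm[OF \<open>2 \<le> p\<close> one, of lam] unfolding D_def by auto
    have "L * s * \<bar>dvec lam 1\<bar> \<le> L * (real n powr (2 / p) * D) * D"
      using sum_abs_dvec_le_dnorm[OF \<open>2 \<le> p\<close> \<open>2 \<le> n\<close> below] D \<open>1 \<le> ln (real n)\<close>
      unfolding L_def s_def D_def by (intro mult_mono) auto
    also have "\<dots> \<le> p * (L * (real n powr (2 / p) * D * D))"
    proof -
      have "0 \<le> L * (real n powr (2 / p) * D * D)"
        using \<open>0 \<le> D\<close> \<open>1 \<le> ln (real n)\<close> unfolding L_def by simp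
      from mult_right_mono[OF _ this, of 1 p] \<open>2 \<le> p\<close> show ?thesis by (simp add: mult.assoc)
    qed
    also have "\<dots> = (sqrt (p * L) * real n powr (1 / p) * D)\<^sup>2"
    proof -
      have "sqrt (p * L) * sqrt (p * L) = p * L"
        using \<open>2 \<le> p\<close> \<open>1 \<le> ln (real n)\<close> unfolding L_def by simp
      moreover have "real n powr (1 / p) * real n powr (1 / p) = real n powr (2 / p)"
        by (simp add: powr_add[symmetric])
      ultimately show ?thesis by (simp add: power2_eq_square algebra_simps)
    qed
    also have "\<dots> \<le> c0\<^sup>2"
      using lp_norm \<open>0 \<le> D\<close> \<open>1 \<le> ln (real n)\<close> unfolding D_def L_def
      by (intro power_mono) auto
    finally show ?thesis unfolding L_def s_def D_def .
  qed
qed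

lemma leading_eigvec_coord_ge_bounded_noise:
  assumes "2 \<le> n" and "1 \<le> ln (real n)" and "lam 1 < lam 0"
    and mono: "\<forall>i j. 1 \<le> i \<and> i \<le> j \<and> j < n \<longrightarrow> lam j \<le> lam i"
    and A: "assumption1 (1 / 20) n lam"
    and bounded: "\<forall>i<n-1. (g i)\<^sup>2 \<le> 200 * ln (real n)"
    and lead: "unit_leading_eigvec n (pert_mat lam g) u" and j: "j \<in> {1..n-1}"
  shows "\<bar>g (j - 1)\<bar> / (4 * (lam 0 - lam j)) \<le> \<bar>u j\<bar>"
proof -
  define \<delta> where "\<delta> = lam 0 - lam 1"
  have ivl: "{1..<n} = {1..n-1}" using \<open>2 \<le> n\<close> by auto
  have gap: "\<forall>k\<in>{1..<n}. \<delta> \<le> lam 0 - lam k" using mono by (auto simp: \<delta>_def)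
  have "0 < \<delta>" using \<open>lam 1 < lam 0\<close> by (simp add: \<delta>_def)
  have below: "\<forall>k\<in>{1..n-1}. lam k < lam 0"
    using gap \<open>0 < \<delta>\<close> unfolding ivl by fastforce
  have "secular_sum n lam g (lam 0) \<le> (\<Sum>k\<in>{1..n-1}. 200 * ln (real n) * \<bar>dvec lam k\<bar>)"
    unfolding secular_sum_def ivl
  proof (rule sum_mono)
    fix k assume k: "k \<in> {1..n-1}"
    then have "(g (k - 1))\<^sup>2 \<le> 200 * ln (real n)" "0 < lam 0 - lam k"
      using bounded below by auto
    then show "(g (k - 1))\<^sup>2 / (lam 0 - lam k) \<le> 200 * ln (real n) * \<bar>dvec lam k\<bar>"
      by (simp add: dvec_def divide_right_mono)
  qed
  also have "\<dots> = 200 * (ln (real n) * (\<Sum>k\<in>{1..n-1}. \<bar>dvec lam k\<bar>))"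
    by (simp add: sum_distrib_left mult.assoc)
  also have "\<dots> \<le> 200 * ((1 / 20)\<^sup>2 / \<bar>dvec lam 1\<bar>)"
  proof -
    have "0 < \<bar>dvec lam 1\<bar>" using \<open>lam 1 < lam 0\<close> by (simp add: dvec_def)
    with assumption1_dvec_bound[OF A \<open>2 \<le> n\<close> \<open>1 \<le> ln (real n)\<close> below]
    show ?thesis by (simp add: pos_le_divide_eq)
  qed
  also have "\<dots> \<le> \<delta>" using \<open>lam 1 < lam 0\<close> by (simp add: dvec_def \<delta>_def power2_eq_square)
  finally have small: "secular_sum n lam g (lam 0) \<le> \<delta>" .
  show ?thesis
    using leading_eigvec_coord_ge[OF _ \<open>0 < \<delta>\<close> gap small lead] j \<open>2 \<le> n\<close> ivl by auto
qed

abbreviation std_normal :: "real measure" where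
  "std_normal \<equiv> density lborel std_normal_density"

lemma prob_space_std_normal: "prob_space std_normal"
  by (rule prob_space_normal_density) simp

lemma fact_double_div_le_power: "fact (2 * k) / (2 ^ k * fact k) \<le> real k ^ k"
proof -
  have "fact (2 * k) div fact k \<le> (2 * k) ^ k"
    using fact_div_fact_le_pow[of k "2 * k"] by simp
  moreover have "fact k dvd (fact (2 * k) :: nat)" by (rule fact_dvd) simp
  ultimately have "fact (2 * k) \<le> (2 * k) ^ k * (fact k :: nat)"
    by (metis dvd_div_mult_self mult_le_mono1)
  then have "real (fact (2 * k)) \<le> real ((2 * k) ^ k * fact k)"
    by (simp only: of_nat_le_iff)
  then have "(fact (2 * k) :: real) \<le> (2 * real k) ^ k * fact k"
    by simp
  then have "(fact (2 * k) :: real) \<le> (2 ^ k * fact k) * real k ^ k"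
    by (simp add: power_mult_distrib algebra_simps)
  then show ?thesis by (simp add: pos_divide_le_eq mult_ac)
qed

lemma std_normal_sq_tail_le:
  assumes "0 < T"
  shows "measure std_normal {x. T < x\<^sup>2} \<le> (real k / T) ^ k"
proof -
  interpret prob_space std_normal by (rule prob_space_std_normal)
  have "integrable std_normal (\<lambda>x. x ^ (2 * k))"
    by (subst integrable_density) (auto simp: integrable_std_normal_moment)
  then have "measure std_normal {x\<in>space std_normal. T ^ k \<le> x ^ (2 * k)}
      \<le> (\<integral>x. x ^ (2 * k) \<partial>std_normal) / T ^ k"
    using \<open>0 < T\<close> by (intro integral_Markov_inequality_measure[where A = UNIV]) auto
  also have "(\<integral>x. x ^ (2 * k) \<partial>std_normal) = fact (2 * k) / (2 ^ k * fact k)"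
    by (subst integral_density) (auto simp: integral_std_normal_moment_even)
  also have "\<dots> / T ^ k \<le> (real k / T) ^ k"
    unfolding power_divide using fact_double_div_le_power[of k] \<open>0 < T\<close>
    by (intro divide_right_mono) auto
  finally have *: "measure std_normal {x\<in>space std_normal. T ^ k \<le> x ^ (2 * k)} \<le> (real k / T) ^ k" .
  have "{x. T < x\<^sup>2} \<subseteq> {x\<in>space std_normal. T ^ k \<le> x ^ (2 * k)}"
    using \<open>0 < T\<close> by (auto simp: power_mult intro: power_mono)
  then have "measure std_normal {x. T < x\<^sup>2}
      \<le> measure std_normal {x\<in>space std_normal. T ^ k \<le> x ^ (2 * k)}"
    by (intro finite_measure_mono) auto
  with * show ?thesis by linarith
qed

lemma std_normal_abs_tail_ge:
  assumes "0 \<le> s"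
  shows "std_normal_density (s + 1) \<le> measure std_normal {x. s \<le> \<bar>x\<bar>}"
proof -
  interpret prob_space std_normal by (rule prob_space_std_normal)
  have "ennreal (std_normal_density (s + 1))
      = (\<integral>\<^sup>+x. ennreal (std_normal_density (s + 1)) * indicator {s..s + 1} x \<partial>lborel)"
    by (subst nn_integral_cmult_indicator) auto
  also have "\<dots> \<le> (\<integral>\<^sup>+x. ennreal (std_normal_density x) * indicator {s..s + 1} x \<partial>lborel)"
  proof (intro nn_integral_mono)
    fix x
    have "std_normal_density (s + 1) \<le> std_normal_density x" if "x \<in> {s..s + 1}"
    proof -
      have "x\<^sup>2 \<le> (s + 1)\<^sup>2" using that \<open>0 \<le> s\<close> by (intro power_mono) auto
      then show ?thesis unfolding std_normal_density_def by (intro mult_left_mono) auto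
    qed
    then show "ennreal (std_normal_density (s + 1)) * indicator {s..s + 1} x
        \<le> ennreal (std_normal_density x) * indicator {s..s + 1} x"
      by (cases "x \<in> {s..s + 1}") auto
  qed
  also have "\<dots> = ennreal (measure std_normal {s..s + 1})"
    by (subst emeasure_density[symmetric]) (auto simp: emeasure_eq_measure)
  finally have "std_normal_density (s + 1) \<le> measure std_normal {s..s + 1}"
    by (subst (asm) ennreal_le_iff) auto
  also have "\<dots> \<le> measure std_normal {x. s \<le> \<bar>x\<bar>}"
    using \<open>0 \<le> s\<close> by (intro finite_measure_mono) auto
  finally show ?thesis .
qed

lemma measure_PiM_PiE_power:
  assumes "prob_space M" and "finite I" and "A \<in> sets M"
  shows "measure (PiM I (\<lambda>_. M)) (PiE I (\<lambda>_. A)) = measure M A ^ card I"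
proof -
  interpret M: prob_space M by fact
  interpret finite_product_prob_space "\<lambda>_. M" I
    by unfold_locales (rule \<open>finite I\<close>)
  show ?thesis using \<open>A \<in> sets M\<close> by (simp add: finite_measure_PiM_emb)
qed

lemma ln_ge_two:
  assumes "9 \<le> n"
  shows "2 \<le> ln (real n)"
proof -
  have "exp 2 = exp (1::real) ^ 2" by (simp add: exp_of_nat_mult[symmetric])
  also have "\<dots> \<le> 3 ^ 2" using exp_le by (intro power_mono) auto
  finally show ?thesis using assms by (subst ln_ge_iff) auto
qed

lemma power_div_le_exp:
  assumes "0 \<le> y"
  shows "(y / real k) ^ k \<le> exp y"
proof (cases "k = 0")
  case False
  have "y / real k \<le> exp (y / real k)"
    using exp_ge_add_one_self[of "y / real k"] by linarith
  then have "(y / real k) ^ k \<le> exp (y / real k) ^ k"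
    using assms by (intro power_mono) auto
  also have "\<dots> = exp y" using False by (simp add: exp_of_nat_mult[symmetric])
  finally show ?thesis .
qed (use assms in simp)

lemma std_normal_sq_tail_le_inverse_cube:
  assumes "9 \<le> n"
  shows "measure std_normal {x. 200 * ln (real n) < x\<^sup>2} \<le> 1 / real n ^ 3"
proof -
  define L where "L = ln (real n)"
  define k where "k = nat \<lceil>L\<rceil>"
  have "2 \<le> L" unfolding L_def using ln_ge_two[OF assms] .
  then have "L \<le> real k" "real k \<le> 2 * L" unfolding k_def by linarith+
  have "measure std_normal {x. 200 * L < x\<^sup>2} \<le> (real k / (200 * L)) ^ k"
    using \<open>2 \<le> L\<close> by (intro std_normal_sq_tail_le) simp
  also have "\<dots> \<le> (1 / exp 3) ^ k"
  proof (rule power_mono)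
    have "exp 3 = exp (1::real) ^ 3" by (simp add: exp_of_nat_mult[symmetric])
    also have "\<dots> \<le> 3 ^ 3" using exp_le by (intro power_mono) auto
    finally have "1 / 100 \<le> 1 / exp (3::real)" by (simp add: divide_simps)
    moreover have "real k / (200 * L) \<le> 1 / 100"
      using \<open>real k \<le> 2 * L\<close> \<open>2 \<le> L\<close> by (simp add: divide_le_eq)
    ultimately show "real k / (200 * L) \<le> 1 / exp 3" by linarith
  qed (use \<open>2 \<le> L\<close> in simp)
  also have "\<dots> = 1 / exp (3 * real k)"
    by (simp add: power_one_over exp_of_nat_mult[symmetric] mult.commute)
  also have "\<dots> \<le> 1 / exp (3 * L)" using \<open>L \<le> real k\<close> by (simp add: divide_simps)
  also have "exp (3 * L) = real n ^ 3"
    using assms by (simp add: L_def exp_of_nat_mult[of 3, simplified])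
  finally show ?thesis unfolding L_def .
qed

lemma gauss_vec_bounded_prob:
  assumes "9 \<le> n"
  shows "1 - 1 / (real n)\<^sup>2
    \<le> measure (gauss_vec (n - 1)) (PiE {..<n - 1} (\<lambda>_. {x. x\<^sup>2 \<le> 200 * ln (real n)}))"
    (is "_ \<le> measure ?P ?B")
proof -
  interpret prob_space std_normal by (rule prob_space_std_normal)
  define \<epsilon> where "\<epsilon> = measure std_normal {x. 200 * ln (real n) < x\<^sup>2}"
  have "{x. x\<^sup>2 \<le> 200 * ln (real n)} = space std_normal - {x. 200 * ln (real n) < x\<^sup>2}"
    by auto
  then have "measure std_normal {x. x\<^sup>2 \<le> 200 * ln (real n)} = 1 - \<epsilon>"
    unfolding \<epsilon>_def by (simp only:) (rule prob_compl, measurable)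
  then have "measure ?P ?B = (1 - \<epsilon>) ^ (n - 1)"
    unfolding gauss_vec_def by (subst measure_PiM_PiE_power[OF prob_space_std_normal]) auto
  also have "\<dots> \<ge> 1 - real (n - 1) * \<epsilon>"
    using Bernoulli_inequality[of "- \<epsilon>" "n - 1"] by (simp add: \<epsilon>_def)
  finally have "1 - real (n - 1) * \<epsilon> \<le> measure ?P ?B" .
  moreover have "real (n - 1) * \<epsilon> \<le> real n * (1 / real n ^ 3)"
    using std_normal_sq_tail_le_inverse_cube[OF assms] assms
    by (intro mult_mono) (auto simp: \<epsilon>_def)
  moreover have "real n * (1 / real n ^ 3) = 1 / (real n)\<^sup>2"
    using assms by (simp add: power2_eq_square power3_eq_cube)
  ultimately show ?thesis by linarith
qed

lemma std_normal_density_ge: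
  assumes "0 \<le> L"
  shows "exp (- L / 2) / 9 \<le> std_normal_density (sqrt (L / 2) + 1)"
proof -
  define s where "s = sqrt (L / 2)"
  have "s\<^sup>2 = L / 2" using assms by (simp add: s_def)
  moreover have "0 \<le> (s - 1)\<^sup>2" by simp
  ultimately have "(s + 1)\<^sup>2 \<le> L + 2"
    unfolding power2_eq_square by (simp add: algebra_simps)
  have "sqrt (2 * pi) \<le> 3"
    using pi_less_4 real_sqrt_le_mono[of "2 * pi" "3\<^sup>2"] by simp
  then have "sqrt (2 * pi) * exp 1 \<le> 3 * 3"
    using exp_le by (intro mult_mono) auto
  then have "exp (- L / 2) / 9 \<le> exp (- L / 2) / (sqrt (2 * pi) * exp 1)"
    by (intro divide_left_mono) auto
  also have "\<dots> = exp (- L / 2 - 1) / sqrt (2 * pi)"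
    by (simp add: exp_diff divide_divide_eq_left mult.commute)
  also have "\<dots> \<le> exp (- (s + 1)\<^sup>2 / 2) / sqrt (2 * pi)"
    using \<open>(s + 1)\<^sup>2 \<le> L + 2\<close> by (intro divide_right_mono) auto
  also have "\<dots> = std_normal_density (s + 1)"
    by (simp add: std_normal_density_def)
  finally show ?thesis unfolding s_def .
qed

lemma gauss_vec_small_prob:
  assumes "9 \<le> n"
  shows "measure (gauss_vec (n - 1)) (PiE {..<n - 1} (\<lambda>_. {x. \<bar>x\<bar> < sqrt (ln (real n) / 2)}))
    \<le> 72 ^ 4 / (real n)\<^sup>2"
proof -
  interpret prob_space std_normal by (rule prob_space_std_normal)
  define s where "s = sqrt (ln (real n) / 2)"
  define r where "r = sqrt (real n)"
  define a where "a = 1 / (9 * r)"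
  have "0 < r" "r * r = real n" using assms by (simp_all add: r_def)
  have "0 \<le> ln (real n)" using ln_ge_two[OF assms] by simp
  have "(exp (ln (real n) / 2))\<^sup>2 = real n"
    using assms by (simp add: power2_eq_square exp_add[symmetric])
  then have "r = exp (ln (real n) / 2)" unfolding r_def by (intro real_sqrt_unique) auto
  then have "exp (- ln (real n) / 2) / 9 = a"
    by (simp add: a_def exp_minus')
  then have "a \<le> measure std_normal {x. s \<le> \<bar>x\<bar>}"
    using std_normal_density_ge[OF \<open>0 \<le> ln (real n)\<close>] std_normal_abs_tail_ge[of s]
      \<open>0 \<le> ln (real n)\<close> unfolding s_def by simp
  moreover have "{x. \<bar>x\<bar> < s} = space std_normal - {x. s \<le> \<bar>x\<bar>}" by auto
  then have "measure std_normal {x. \<bar>x\<bar> < s} = 1 - measure std_normal {x. s \<le> \<bar>x\<bar>}"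
    by (simp only:) (rule prob_compl, measurable)
  ultimately have small: "measure std_normal {x. \<bar>x\<bar> < s} \<le> exp (- a)"
    using exp_minus_ge[of a] by linarith
  have "measure (gauss_vec (n - 1)) (PiE {..<n - 1} (\<lambda>_. {x. \<bar>x\<bar> < s}))
      = measure std_normal {x. \<bar>x\<bar> < s} ^ (n - 1)"
    unfolding gauss_vec_def by (subst measure_PiM_PiE_power[OF prob_space_std_normal]) auto
  also have "\<dots> \<le> exp (- a) ^ (n - 1)"
    using small by (intro power_mono) auto
  also have "\<dots> = exp (- (a * real (n - 1)))"
    by (simp add: exp_of_nat_mult[symmetric] mult.commute)
  also have "\<dots> \<le> exp (- (r / 18))"
  proof -
    have "r / 18 = a * (real n / 2)"
      using \<open>0 < r\<close> by (simp add: a_def flip: \<open>r * r = real n\<close>)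
    also have "\<dots> \<le> a * real (n - 1)"
      using assms \<open>0 < r\<close> by (intro mult_left_mono) (auto simp: a_def)
    finally show ?thesis by simp
  qed
  also have "\<dots> = inverse (exp (r / 18))" by (simp add: exp_minus)
  also have "\<dots> \<le> inverse ((real n)\<^sup>2 / 72 ^ 4)"
  proof (rule le_imp_inverse_le)
    have "(r / 18 / real 4) ^ 4 = (r * r) ^ 2 / 72 ^ 4"
      by (simp add: power_divide power_mult_distrib flip: power_mult)
    then show "(real n)\<^sup>2 / 72 ^ 4 \<le> exp (r / 18)"
      using power_div_le_exp[of "r / 18" 4] \<open>0 < r\<close> \<open>r * r = real n\<close> by simp
  qed (use assms in simp)
  also have "\<dots> = 72 ^ 4 / (real n)\<^sup>2" by simp
  finally show ?thesis unfolding s_def .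
qed

lemma max_scaled_coord_ge:
  fixes n i :: nat and lam g u :: "nat \<Rightarrow> real"
  assumes below: "\<forall>j\<in>{1..n-1}. lam j < lam 0"
    and coords: "\<forall>j\<in>{1..n-1}. \<bar>g (j - 1)\<bar> / (4 * (lam 0 - lam j)) \<le> \<bar>u j\<bar>"
    and "i < n - 1" and "t \<le> \<bar>g i\<bar>"
  shows "t / 4 \<le> Max ((\<lambda>j. (lam 0 - lam j) * \<bar>u j\<bar>) ` {1..n-1})"
proof -
  have j: "i + 1 \<in> {1..n-1}" using \<open>i < n - 1\<close> by simp
  then have gap: "0 < lam 0 - lam (i + 1)" using below by auto
  have "(lam 0 - lam (i + 1)) * (\<bar>g i\<bar> / (4 * (lam 0 - lam (i + 1)))) = \<bar>g i\<bar> / 4"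
    using gap by (simp add: field_simps)
  then have "t / 4 \<le> (lam 0 - lam (i + 1)) * (\<bar>g i\<bar> / (4 * (lam 0 - lam (i + 1))))"
    using \<open>t \<le> \<bar>g i\<bar>\<close> by simp
  also have "\<dots> \<le> (lam 0 - lam (i + 1)) * \<bar>u (i + 1)\<bar>"
    using bspec[OF coords j] gap by (intro mult_left_mono) auto
  also have "\<dots> \<le> Max ((\<lambda>j. (lam 0 - lam j) * \<bar>u j\<bar>) ` {1..n-1})"
    using j by (intro Max_ge) auto
  finally show ?thesis .
qed

lemma leading_eigvec_bounds_whp:
  fixes n :: nat and lam :: "nat \<Rightarrow> real"
  assumes "2 \<le> n" and "lam 1 < lam 0"
    and mono: "\<forall>i j. 1 \<le> i \<and> i \<le> j \<and> j < n \<longrightarrow> lam j \<le> lam i"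
    and A: "assumption1 (1 / 20) n lam"
  shows "(\<exists>S\<in>sets (gauss_vec (n - 1)).
            measure (gauss_vec (n - 1)) S \<ge> 1 - 10^8 / (real n)\<^sup>2 \<and>
            (\<forall>g\<in>S. \<forall>u. unit_leading_eigvec n (pert_mat lam g) u \<longrightarrow>
               (\<forall>j\<in>{1..n-1}. \<bar>u j\<bar> \<ge> \<bar>g (j - 1)\<bar> / (4 * (lam 0 - lam j)))))
       \<and> (\<exists>S\<in>sets (gauss_vec (n - 1)).
            measure (gauss_vec (n - 1)) S \<ge> 1 - 10^8 / (real n)\<^sup>2 \<and>
            (\<forall>g\<in>S. \<forall>u. unit_leading_eigvec n (pert_mat lam g) u \<longrightarrow>
               Max ((\<lambda>j. (lam 0 - lam j) * \<bar>u j\<bar>) ` {1..n-1}) \<ge> 1 / 8 * sqrt (ln (real n))))"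
proof (cases "n < 9")
  case True
  then have "(real n)\<^sup>2 \<le> 9\<^sup>2" by (intro power_mono) auto
  then have "1 - 10^8 / (real n)\<^sup>2 \<le> 0"
    using \<open>2 \<le> n\<close> by (simp add: field_simps)
  then show ?thesis by (intro conjI bexI[of _ "{}"]) auto
next
  case False
  define P where "P = gauss_vec (n - 1)"
  define bounded where "bounded = PiE {..<n - 1} (\<lambda>_. {x::real. x\<^sup>2 \<le> 200 * ln (real n)})"
  define small where "small = PiE {..<n - 1} (\<lambda>_. {x::real. \<bar>x\<bar> < sqrt (ln (real n) / 2)})"
  interpret prob_space P
    unfolding P_def gauss_vec_def by (intro prob_space_PiM prob_space_std_normal)
  have sets: "bounded \<in> sets P" "small \<in> sets P"
    unfolding bounded_def small_def P_def gauss_vec_def by (auto intro!: sets_PiM_I_finite)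
  have "1 - 1 / (real n)\<^sup>2 \<le> measure P bounded" "measure P small \<le> 72 ^ 4 / (real n)\<^sup>2"
    using gauss_vec_bounded_prob gauss_vec_small_prob False
    unfolding P_def bounded_def small_def by auto
  moreover have "measure P bounded - measure P small \<le> measure P (bounded - small)"
    using sets finite_measure_Diff'[of bounded small] finite_measure_mono[of "bounded \<inter> small" small]
    by auto
  moreover have "1 / (real n)\<^sup>2 + 72 ^ 4 / (real n)\<^sup>2 \<le> 10^8 / (real n)\<^sup>2"
    by (simp add: add_divide_distrib[symmetric] divide_right_mono)
  moreover have "0 \<le> 72 ^ 4 / (real n)\<^sup>2" by simp
  ultimately have prob: "1 - 10^8 / (real n)\<^sup>2 \<le> measure P bounded"
      "1 - 10^8 / (real n)\<^sup>2 \<le> measure P (bounded - small)"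
    by linarith+
  have "1 \<le> ln (real n)" using ln_ge_two[of n] False by simp
  have below: "\<forall>j\<in>{1..n-1}. lam j < lam 0"
  proof
    fix j assume "j \<in> {1..n-1}"
    then have "lam j \<le> lam 1" using mono by auto
    with \<open>lam 1 < lam 0\<close> show "lam j < lam 0" by simp
  qed
  have coords: "\<forall>j\<in>{1..n-1}. \<bar>u j\<bar> \<ge> \<bar>g (j - 1)\<bar> / (4 * (lam 0 - lam j))"
    if "g \<in> bounded" "unit_leading_eigvec n (pert_mat lam g) u" for g u
    using leading_eigvec_coord_ge_bounded_noise[OF \<open>2 \<le> n\<close> \<open>1 \<le> ln (real n)\<close>
        \<open>lam 1 < lam 0\<close> mono A _ that(2)] that(1)
    unfolding bounded_def by (auto simp: PiE_iff)
  have "Max ((\<lambda>j. (lam 0 - lam j) * \<bar>u j\<bar>) ` {1..n-1}) \<ge> 1 / 8 * sqrt (ln (real n))"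
    if "g \<in> bounded - small" "unit_leading_eigvec n (pert_mat lam g) u" for g u
  proof -
    have "\<not> (\<forall>i<n - 1. \<bar>g i\<bar> < sqrt (ln (real n) / 2))"
      using that(1) unfolding bounded_def small_def by (auto simp: PiE_iff)
    then obtain i where "i < n - 1" "sqrt (ln (real n) / 2) \<le> \<bar>g i\<bar>"
      by (auto simp: not_less)
    moreover have "1 / 8 * sqrt (ln (real n)) \<le> sqrt (ln (real n) / 2) / 4"
      using \<open>1 \<le> ln (real n)\<close> by (simp add: real_sqrt_divide divide_simps sqrt2_less_2 less_imp_le)
    ultimately show ?thesis
      using max_scaled_coord_ge[OF below coords[OF _ that(2)]] that(1) by fastforce
  qed
  with sets prob coords show ?thesis
    unfolding P_def[symmetric] by (intro conjI bexI[of _ bounded] bexI[of _ "bounded - small"]) blast+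
qed

theorem theorem2:
  "\<exists>c0>0. \<exists>C>0. \<exists>c>0. \<forall>(n::nat) (lam::nat \<Rightarrow> real).
     n \<ge> 2 \<and> lam 0 > lam 1 \<and> (\<forall>i j. 1 \<le> i \<and> i \<le> j \<and> j < n \<longrightarrow> lam j \<le> lam i)
     \<and> assumption1 c0 n lam \<longrightarrow>
       (\<exists>S\<in>sets (gauss_vec (n - 1)).
          measure (gauss_vec (n - 1)) S \<ge> 1 - C / (real n)\<^sup>2 \<and>
          (\<forall>g\<in>S. \<forall>u. unit_leading_eigvec n (pert_mat lam g) u \<longrightarrow>
             (\<forall>j\<in>{1..n-1}. \<bar>u j\<bar> \<ge> \<bar>g (j - 1)\<bar> / (4 * (lam 0 - lam j)))))
     \<and> (\<exists>S\<in>sets (gauss_vec (n - 1)).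
          measure (gauss_vec (n - 1)) S \<ge> 1 - C / (real n)\<^sup>2 \<and>
          (\<forall>g\<in>S. \<forall>u. unit_leading_eigvec n (pert_mat lam g) u \<longrightarrow>
             Max ((\<lambda>j. (lam 0 - lam j) * \<bar>u j\<bar>) ` {1..n-1}) \<ge> c * sqrt (ln (real n))))"
  by (rule exI[of _ "1 / 20"], rule conjI, simp, rule exI[of _ "10^8"], rule conjI, simp,
      rule exI[of _ "1 / 8"], rule conjI, simp, use leading_eigvec_bounds_whp in blast)

end
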